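(* Let $\lambda=2\cos(\pi/5)$ and let $H_5$ be the subgroup of $SL(2,\mathbb R)$ generated by $S=\begin{pmatrix}0&1\\-1&0\end{pmatrix}$ and $T=\begin{pmatrix}1&\lambda\\0&1\end{pmatrix}$. Let $\tau,\pi\in\mathbb Z[\lambda]$ be nonzero and let $a$ and $b$ be the smallest positive rational integers in the ideals $(\tau)$ and $(\pi)$ respectively. Suppose $\gcd(a,b)=1$. Then $H_5=H(\tau)H(\pi)$ and $[H_5:H(\tau\pi)]=[H_5:H(\tau)]\,[H_5:H(\pi)]$.
   Context: For $\alpha\in\mathbb Z[\lambda]$, $H(\alpha)=\{(a_{ij})\in H_5 : a_{11}-1,\ a_{22}-1,\ a_{12},\ a_{21}\in \alpha\mathbb Z[\lambda]\}$ is the principal congruence subgroup of level $\alpha$. *)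

theory Defs
  imports "HOL-Analysis.Analysis" "HOL-Algebra.Coset" "HOL-Algebra.Generated_Groups"
begin

definition mat2 :: "real \<Rightarrow> real \<Rightarrow> real \<Rightarrow> real \<Rightarrow> real^2^2" where
  "mat2 a b c d = (\<chi> i j. if i = 1 then (if j = 1 then a else b) else (if j = 1 then c else d))"

definition lam :: real where "lam = 2 * cos (pi / 5)"

definition Sm :: "real^2^2" where "Sm = mat2 0 1 (-1) 0"
definition Tm :: "real^2^2" where "Tm = mat2 1 lam 0 1"

definition SL2 :: "(real^2^2) monoid" where
  "SL2 = \<lparr>carrier = {A. det A = 1}, mult = (\<lambda>A B. A ** B), one = mat 1\<rparr>"

definition H5 :: "(real^2^2) set" where "H5 = generate SL2 {Sm, Tm}"

definition H5grp :: "(real^2^2) monoid" where "H5grp = SL2\<lparr>carrier := H5\<rparr>"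

definition Zlam :: "real set" where
  "Zlam = {of_int m + of_int n * lam | m n. True}"

definition ideal_gen :: "real \<Rightarrow> real set" where
  "ideal_gen \<alpha> = {\<alpha> * x | x. x \<in> Zlam}"

definition min_pos_int :: "real \<Rightarrow> nat" where
  "min_pos_int \<alpha> = (LEAST n::nat. 0 < n \<and> real n \<in> ideal_gen \<alpha>)"

definition Hcong :: "real \<Rightarrow> (real^2^2) set" where
  "Hcong \<alpha> = {A \<in> H5. A$1$1 - 1 \<in> ideal_gen \<alpha> \<and> A$2$2 - 1 \<in> ideal_gen \<alpha>
                     \<and> A$1$2 \<in> ideal_gen \<alpha> \<and> A$2$1 \<in> ideal_gen \<alpha>}"

definition idx5 :: "(real^2^2) set \<Rightarrow> nat" where
  "idx5 K = card (rcosets\<^bsub>H5grp\<^esub> K)"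

end

theory Submission
  imports Defs "HOL-Algebra.SndIsomorphismGrp"
begin

text \<open>
  The unipotent matrices \<open>T\<^sup>n\<close> and \<open>L\<^sup>n = S T\<^sup>-\<^sup>n S\<^sup>-\<^sup>1\<close> generate \<open>H\<^sub>5\<close>: because
  \<open>\<lambda>\<^sup>2 = \<lambda> + 1\<close>, \<open>S\<close> is the word \<open>L T\<^sup>-\<^sup>1 L T\<^sup>-\<^sup>1 L\<close>. Writing \<open>1 = u a + v b\<close> with
  rational integers, \<open>T\<^sup>n = T\<^sup>n\<^sup>u\<^sup>a T\<^sup>n\<^sup>v\<^sup>b\<close> with the first factor in \<open>H(\<tau>)\<close> and the second
  in \<open>H(\<pi>)\<close>, and likewise for \<open>L\<close>; as \<open>H(\<tau>)\<close> is normal, \<open>H(\<tau>) H(\<pi>)\<close> is a subgroup,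
  hence all of \<open>H\<^sub>5\<close>. The same Bezout identity makes \<open>(\<tau>)\<close> and \<open>(\<pi>)\<close> comaximal, so
  \<open>(\<tau>\<pi>) = (\<tau>) \<inter> (\<pi>)\<close> and \<open>H(\<tau>\<pi>) = H(\<tau>) \<inter> H(\<pi>)\<close>. Finally, for subgroups with
  \<open>H K = G\<close>, the map \<open>(H \<inter> K) g \<mapsto> (H g, K g)\<close> is a bijection of coset spaces.
\<close>

lemma cos_triple: "cos (3 * (x::real)) = 4 * cos x ^ 3 - 3 * cos x"
proof -
  have "cos (3 * x) = cos (2 * x + x)" by (simp add: algebra_simps)
  also have "\<dots> = cos (2 * x) * cos x - sin (2 * x) * sin x" by (rule cos_add)
  also have "\<dots> = (2 * cos x ^ 2 - 1) * cos x - 2 * sin x ^ 2 * cos x"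
    by (simp add: cos_double_cos sin_double power2_eq_square)
  also have "\<dots> = (2 * cos x ^ 2 - 1) * cos x - 2 * (1 - cos x ^ 2) * cos x"
    by (simp add: sin_squared_eq)
  finally show ?thesis by (simp add: algebra_simps power3_eq_cube power2_eq_square)
qed

lemma lam_squared: "lam * lam = lam + 1"
proof -
  define c where "c = cos (pi / 5)"
  have "c > 0" unfolding c_def by (rule cos_gt_zero_pi) (use pi_gt_zero in linarith)+
  have "cos (3 * (pi / 5)) = - cos (2 * (pi / 5))"
    using cos_pi_minus[of "2 * (pi / 5)"] by (simp add: field_simps)
  hence "(c + 1) * (4 * c * c - 2 * c - 1) = 0"
    unfolding cos_triple cos_double_cos c_def[symmetric]
    by (simp add: algebra_simps power3_eq_cube power2_eq_square)
  with \<open>c > 0\<close> have "4 * c * c = 2 * c + 1" by simp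
  thus ?thesis unfolding lam_def c_def[symmetric] by (simp add: algebra_simps)
qed

lemma Zlam_iff: "x \<in> Zlam \<longleftrightarrow> (\<exists>m n. x = of_int m + of_int n * lam)"
  unfolding Zlam_def by blast

lemma Zlam_of_int [simp]: "of_int m \<in> Zlam"
  unfolding Zlam_iff by (rule exI[of _ m], rule exI[of _ 0]) simp

lemma Zlam_0 [simp]: "0 \<in> Zlam"
  and Zlam_1 [simp]: "1 \<in> Zlam"
  using Zlam_of_int[of 0] Zlam_of_int[of 1] by simp_all

lemma Zlam_lam [simp]: "lam \<in> Zlam"
  unfolding Zlam_iff by (rule exI[of _ 0], rule exI[of _ 1]) simp

lemma Zlam_add [simp]:
  assumes "x \<in> Zlam" "y \<in> Zlam" shows "x + y \<in> Zlam"
proof -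
  obtain m n p q where "x = of_int m + of_int n * lam" "y = of_int p + of_int q * lam"
    using assms Zlam_iff by blast
  hence "x + y = of_int (m + p) + of_int (n + q) * lam" by (simp add: algebra_simps)
  thus ?thesis unfolding Zlam_iff by blast
qed

lemma Zlam_uminus [simp]:
  assumes "x \<in> Zlam" shows "- x \<in> Zlam"
proof -
  obtain m n where "x = of_int m + of_int n * lam" using assms Zlam_iff by blast
  hence "- x = of_int (- m) + of_int (- n) * lam" by simp
  thus ?thesis unfolding Zlam_iff by blast
qed

lemma Zlam_diff [simp]: "x \<in> Zlam \<Longrightarrow> y \<in> Zlam \<Longrightarrow> x - y \<in> Zlam"
  using Zlam_add[of x "- y"] by simp

lemma Zlam_mult [simp]:
  assumes "x \<in> Zlam" "y \<in> Zlam" shows "x * y \<in> Zlam"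
proof -
  obtain m n p q where x: "x = of_int m + of_int n * lam" and y: "y = of_int p + of_int q * lam"
    using assms Zlam_iff by blast
  have "x * y = of_int m * of_int p + (of_int m * of_int q + of_int n * of_int p) * lam
                + of_int n * of_int q * (lam * lam)"
    unfolding x y by (simp add: algebra_simps)
  also have "\<dots> = of_int (m * p + n * q) + of_int (m * q + n * p + n * q) * lam"
    unfolding lam_squared by (simp add: algebra_simps)
  finally show ?thesis unfolding Zlam_iff by blast
qed

text \<open>Anisotropy of the norm form of \<open>\<int>[\<lambda>]\<close>, by descent: the form is odd unless \<open>p\<close>
  and \<open>q\<close> are both even.\<close>
lemma int_golden_form_eq_0_imp:
  fixes p q :: int
  shows "p\<^sup>2 + p * q - q\<^sup>2 = 0 \<Longrightarrow> p = 0"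
proof (induction "nat \<bar>p\<bar>" arbitrary: p q rule: less_induct)
  case less
  show ?case
  proof (rule ccontr)
    assume "p \<noteq> 0"
    have "even p \<and> even q"
    proof (rule ccontr)
      assume "\<not> (even p \<and> even q)"
      hence "odd (p\<^sup>2 + p * q - q\<^sup>2)"
        by (cases "even p"; cases "even q") (simp_all add: power2_eq_square)
      with less.prems show False by simp
    qed
    then obtain p' q' where pq: "p = 2 * p'" "q = 2 * q'" by (meson dvdE)
    with less.prems have "p'\<^sup>2 + p' * q' - q'\<^sup>2 = 0" by (simp add: algebra_simps power2_eq_square)
    moreover have "nat \<bar>p'\<bar> < nat \<bar>p\<bar>" using \<open>p \<noteq> 0\<close> pq by auto
    ultimately have "p' = 0" using less.hyps by blast
    with pq \<open>p \<noteq> 0\<close> show False by simp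
  qed
qed

lemma ideal_gen_iff: "x \<in> ideal_gen t \<longleftrightarrow> (\<exists>y\<in>Zlam. x = t * y)"
  unfolding ideal_gen_def by blast

lemma ideal_gen_mult_Zlam: "y \<in> Zlam \<Longrightarrow> t * y \<in> ideal_gen t"
  unfolding ideal_gen_iff by blast

lemma ideal_gen_0 [simp]: "0 \<in> ideal_gen t"
  using ideal_gen_mult_Zlam[of 0 t] by simp

lemma ideal_gen_add [simp]: "x \<in> ideal_gen t \<Longrightarrow> y \<in> ideal_gen t \<Longrightarrow> x + y \<in> ideal_gen t"
  unfolding ideal_gen_iff by (metis Zlam_add distrib_left)

lemma ideal_gen_uminus [simp]: "x \<in> ideal_gen t \<Longrightarrow> - x \<in> ideal_gen t"
  unfolding ideal_gen_iff by (metis Zlam_uminus mult_minus_right)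

lemma ideal_gen_mult_right: "x \<in> ideal_gen t \<Longrightarrow> y \<in> Zlam \<Longrightarrow> x * y \<in> ideal_gen t"
  unfolding ideal_gen_iff by (metis Zlam_mult mult.assoc)

lemma ideal_gen_mult_left: "x \<in> ideal_gen t \<Longrightarrow> y \<in> Zlam \<Longrightarrow> y * x \<in> ideal_gen t"
  using ideal_gen_mult_right by (simp add: mult.commute)

text \<open>\<open>t\<close> times its Galois conjugate is the rational integer \<open>m\<^sup>2 + m n - n\<^sup>2\<close>.\<close>
lemma ideal_gen_contains_pos_nat:
  assumes "t \<in> Zlam" "t \<noteq> 0"
  shows "\<exists>k::nat. 0 < k \<and> real k \<in> ideal_gen t"
proof -
  obtain m n where t: "t = of_int m + of_int n * lam" using assms(1) Zlam_iff by blast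
  define N where "N = m\<^sup>2 + m * n - n\<^sup>2"
  have "t * (of_int (m + n) - of_int n * lam)
        = of_int m * of_int (m + n) + (of_int n * of_int (m + n) - of_int m * of_int n) * lam
          - of_int n * of_int n * (lam * lam)"
    unfolding t by (simp add: algebra_simps)
  also have "\<dots> = of_int N"
    unfolding lam_squared N_def by (simp add: algebra_simps power2_eq_square)
  finally have "of_int N \<in> ideal_gen t"
    by (metis ideal_gen_mult_Zlam Zlam_diff Zlam_mult Zlam_of_int Zlam_lam)
  hence "of_int \<bar>N\<bar> \<in> ideal_gen t" by (cases "N \<ge> 0") (auto dest: ideal_gen_uminus)
  moreover have "N \<noteq> 0"
    using int_golden_form_eq_0_imp[of m n] assms(2) unfolding N_def t by force
  ultimately show ?thesis by (intro exI[of _ "nat \<bar>N\<bar>"]) simp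
qed

lemma min_pos_int_in_ideal_gen:
  "t \<in> Zlam \<Longrightarrow> t \<noteq> 0 \<Longrightarrow> real (min_pos_int t) \<in> ideal_gen t"
  unfolding min_pos_int_def using LeastI_ex[OF ideal_gen_contains_pos_nat] by blast

lemma ideal_gen_mult_eq_Int:
  assumes "t \<in> Zlam" "p \<in> Zlam" "x \<in> ideal_gen t" "y \<in> ideal_gen p" "x + y = 1"
  shows "ideal_gen (t * p) = ideal_gen t \<inter> ideal_gen p"
proof (intro equalityI subsetI IntI)
  fix z assume "z \<in> ideal_gen (t * p)"
  then obtain w where "w \<in> Zlam" "z = t * p * w" unfolding ideal_gen_iff by blast
  thus "z \<in> ideal_gen t" "z \<in> ideal_gen p"
    by (metis assms(1,2) ideal_gen_mult_Zlam Zlam_mult mult.assoc mult.commute)+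
next
  fix z assume "z \<in> ideal_gen t \<inter> ideal_gen p"
  then obtain z1 z2 where z1: "z1 \<in> Zlam" "z = t * z1" and z2: "z2 \<in> Zlam" "z = p * z2"
    unfolding Int_iff ideal_gen_iff by blast
  obtain x' y' where x': "x' \<in> Zlam" "x = t * x'" and y': "y' \<in> Zlam" "y = p * y'"
    using assms(3,4) unfolding ideal_gen_iff by blast
  have "z = z * x + z * y" using \<open>x + y = 1\<close> by (metis distrib_left mult_1_right)
  also have "z * x = t * p * (z2 * x')" unfolding x'(2) by (subst z2(2)) (simp add: ac_simps)
  also have "z * y = t * p * (z1 * y')" unfolding y'(2) by (subst z1(2)) (simp add: ac_simps)
  finally have "z = t * p * (z2 * x' + z1 * y')" by (simp add: distrib_left)
  moreover have "z2 * x' + z1 * y' \<in> Zlam" using z1 z2 x' y' by simp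
  ultimately show "z \<in> ideal_gen (t * p)" using ideal_gen_mult_Zlam by metis
qed

lemma (in group) rcos_eq_iff:
  assumes "subgroup H G" "a \<in> carrier G" "b \<in> carrier G"
  shows "H #> a = H #> b \<longleftrightarrow> a \<otimes> inv b \<in> H"
proof -
  have "H #> a = H #> b \<longleftrightarrow> a \<in> H #> b"
    using rcos_self[OF assms(2,1)] repr_independence[OF _ assms(3,1)] by auto
  also have "\<dots> \<longleftrightarrow> a \<otimes> inv b \<in> H" by (rule subgroup.rcos_module[OF assms(1) is_group assms(3,2)])
  finally show ?thesis .
qed

lemma (in group) set_mult_subgroup_absorb:
  assumes "subgroup H G" "subgroup K G" "K \<subseteq> H"
  shows "H <#> K = H"
proof
  show "H <#> K \<subseteq> H" using mono_set_mult[of H H K H G] assms(3) subgroup_mult_id[OF assms(1)]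
    by simp
  have "H = H <#> {\<one>}" using r_coset_eq_set_mult coset_mult_one subgroup.subset assms(1) by metis
  also have "\<dots> \<subseteq> H <#> K" by (rule mono_set_mult) (use subgroup.one_closed[OF assms(2)] in auto)
  finally show "H \<subseteq> H <#> K" .
qed

lemma (in group) normal_set_mult_subgroup:
  assumes "N \<lhd> G" "subgroup K G"
  shows "subgroup (N <#> K) G"
  using second_isomorphism_grp.normal_set_mult_subgroup assms
  unfolding second_isomorphism_grp_def second_isomorphism_grp_axioms_def by blast

lemma (in group) rcos_Int_eq_iff:
  assumes "subgroup H G" "subgroup K G" "a \<in> carrier G" "b \<in> carrier G"
  shows "(H \<inter> K) #> a = (H \<inter> K) #> b \<longleftrightarrow> H #> a = H #> b \<and> K #> a = K #> b"
  using assms by (simp add: rcos_eq_iff subgroups_Inter_pair)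

text \<open>If \<open>a b\<^sup>-\<^sup>1 = h k\<close>, then \<open>c = h\<^sup>-\<^sup>1 a = k b\<close>.\<close>
lemma (in group) set_mult_eq_carrier_common_rcos:
  assumes H: "subgroup H G" and K: "subgroup K G" and HK: "carrier G = H <#> K"
    and a: "a \<in> carrier G" and b: "b \<in> carrier G"
  obtains c where "c \<in> carrier G" "H #> c = H #> a" "K #> c = K #> b"
proof -
  obtain h k where hk: "h \<in> H" "k \<in> K" "a \<otimes> inv b = h \<otimes> k"
    using HK a b unfolding set_mult_def by (metis (no_types, lifting) UN_E inv_closed m_closed singletonD)
  have hk_carrier: "h \<in> carrier G" "k \<in> carrier G" using hk H K subgroup.mem_carrier by metis+
  define c where "c = inv h \<otimes> a"
  have c: "c \<in> carrier G" unfolding c_def using hk_carrier a by simp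
  have "c \<otimes> inv a = inv h" unfolding c_def using hk_carrier a by (simp add: m_assoc)
  hence "H #> c = H #> a" using rcos_eq_iff[OF H c a] hk H subgroup.m_inv_closed by metis
  moreover have "c \<otimes> inv b = inv h \<otimes> (a \<otimes> inv b)"
    unfolding c_def using hk_carrier a b by (simp add: m_assoc)
  hence "c \<otimes> inv b = k" using hk hk_carrier by (simp add: m_assoc[symmetric])
  hence "K #> c = K #> b" using rcos_eq_iff[OF K c b] hk by simp
  ultimately show ?thesis using c that by blast
qed

lemma (in group) card_rcosets_Int:
  assumes H: "subgroup H G" and K: "subgroup K G" and HK: "carrier G = H <#> K"
  shows "card (rcosets (H \<inter> K)) = card (rcosets H) * card (rcosets K)"
proof -
  have HiK: "subgroup (H \<inter> K) G" using subgroups_Inter_pair H K by blast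
  define f where "f C = (H <#> C, K <#> C)" for C
  have absorb: "L <#> ((H \<inter> K) #> a) = L #> a"
    if "subgroup L G" "H \<inter> K \<subseteq> L" "a \<in> carrier G" for L a
  proof -
    have "L <#> ((H \<inter> K) #> a) = (L <#> (H \<inter> K)) #> a"
      by (rule setmult_rcos_assoc) (use that subgroup.subset HiK in auto)
    thus ?thesis using set_mult_subgroup_absorb[OF that(1) HiK that(2)] by simp
  qed
  have f_rcos: "f ((H \<inter> K) #> a) = (H #> a, K #> a)" if "a \<in> carrier G" for a
    unfolding f_def using absorb[OF H _ that] absorb[OF K _ that] by simp
  have "bij_betw f (rcosets (H \<inter> K)) ((rcosets H) \<times> (rcosets K))"
  proof (rule bij_betw_imageI)
    show "inj_on f (rcosets (H \<inter> K))"
    proof (rule inj_onI)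
      fix C D assume "C \<in> rcosets (H \<inter> K)" "D \<in> rcosets (H \<inter> K)" "f C = f D"
      then obtain a b where "a \<in> carrier G" "b \<in> carrier G" "C = (H \<inter> K) #> a" "D = (H \<inter> K) #> b"
        unfolding RCOSETS_def by auto
      with \<open>f C = f D\<close> show "C = D" using f_rcos rcos_Int_eq_iff[OF H K] by simp
    qed
    show "f ` (rcosets (H \<inter> K)) = (rcosets H) \<times> (rcosets K)"
    proof (intro equalityI subsetI)
      fix X assume "X \<in> f ` (rcosets (H \<inter> K))"
      thus "X \<in> (rcosets H) \<times> (rcosets K)" unfolding RCOSETS_def using f_rcos by auto
    next
      fix X assume "X \<in> (rcosets H) \<times> (rcosets K)"
      then obtain a b where ab: "a \<in> carrier G" "b \<in> carrier G" "X = (H #> a, K #> b)"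
        unfolding RCOSETS_def by auto
      then obtain c where "c \<in> carrier G" "X = f ((H \<inter> K) #> c)"
        using set_mult_eq_carrier_common_rcos[OF H K HK] f_rcos by metis
      thus "X \<in> f ` (rcosets (H \<inter> K))" unfolding RCOSETS_def by blast
    qed
  qed
  thus ?thesis using bij_betw_same_card card_cartesian_product by metis
qed

lemma mat2_nth [simp]:
  "mat2 a b c d $ 1 $ 1 = a" "mat2 a b c d $ 1 $ 2 = b"
  "mat2 a b c d $ 2 $ 1 = c" "mat2 a b c d $ 2 $ 2 = d"
  unfolding mat2_def by simp_all

lemma mat2_cases: obtains a b c d where "A = mat2 a b c d"
proof
  show "A = mat2 (A$1$1) (A$1$2) (A$2$1) (A$2$2)" unfolding vec_eq_iff forall_2 by simp
qed

lemma mat2_eq_iff: "mat2 a b c d = mat2 a' b' c' d' \<longleftrightarrow> a = a' \<and> b = b' \<and> c = c' \<and> d = d'"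
  by (metis mat2_nth)

lemma mat2_mult:
  "mat2 a b c d ** mat2 a' b' c' d'
   = mat2 (a * a' + b * c') (a * b' + b * d') (c * a' + d * c') (c * b' + d * d')"
  unfolding vec_eq_iff forall_2 by (simp add: matrix_matrix_mult_def sum_2)

lemma mat2_one: "(mat 1 :: real^2^2) = mat2 1 0 0 1"
  unfolding vec_eq_iff forall_2 by (simp add: mat_def)

lemma det_mat2: "det (mat2 a b c d) = a * d - b * c"
  by (simp add: det_2)

definition adjugate2 :: "real^2^2 \<Rightarrow> real^2^2" where
  "adjugate2 A = mat2 (A$2$2) (- A$1$2) (- A$2$1) (A$1$1)"

lemma adjugate2_mat2 [simp]: "adjugate2 (mat2 a b c d) = mat2 d (- b) (- c) a"
  by (simp add: adjugate2_def)

lemma adjugate2_mult: "det A = 1 \<Longrightarrow> adjugate2 A ** A = mat 1"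
  and mult_adjugate2: "det A = 1 \<Longrightarrow> A ** adjugate2 A = mat 1"
  by (cases A rule: mat2_cases; simp add: mat2_mult mat2_one det_mat2 mat2_eq_iff algebra_simps)+

lemma det_adjugate2: "det (adjugate2 A) = det A"
  by (cases A rule: mat2_cases) (simp add: det_mat2 algebra_simps)

lemma SL2_simps [simp]:
  "carrier SL2 = {A. det A = 1}" "mult SL2 = (\<lambda>A B. A ** B)" "one SL2 = mat 1"
  by (simp_all add: SL2_def)

lemma group_SL2: "group SL2"
proof (rule groupI)
  show "\<And>x y. x \<in> carrier SL2 \<Longrightarrow> y \<in> carrier SL2 \<Longrightarrow> x \<otimes>\<^bsub>SL2\<^esub> y \<in> carrier SL2"
    by (simp add: det_mul)
  show "\<one>\<^bsub>SL2\<^esub> \<in> carrier SL2" by simp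
  show "\<And>x y z. x \<in> carrier SL2 \<Longrightarrow> y \<in> carrier SL2 \<Longrightarrow> z \<in> carrier SL2 \<Longrightarrow>
      x \<otimes>\<^bsub>SL2\<^esub> y \<otimes>\<^bsub>SL2\<^esub> z = x \<otimes>\<^bsub>SL2\<^esub> (y \<otimes>\<^bsub>SL2\<^esub> z)"
    by (simp add: matrix_mul_assoc)
  show "\<And>x. x \<in> carrier SL2 \<Longrightarrow> \<one>\<^bsub>SL2\<^esub> \<otimes>\<^bsub>SL2\<^esub> x = x" by simp
  show "\<And>x. x \<in> carrier SL2 \<Longrightarrow> \<exists>y\<in>carrier SL2. y \<otimes>\<^bsub>SL2\<^esub> x = \<one>\<^bsub>SL2\<^esub>"
    using adjugate2_mult det_adjugate2 by fastforce
qed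

interpretation SL2: group SL2 by (rule group_SL2)

lemma inv_SL2: "det A = 1 \<Longrightarrow> inv\<^bsub>SL2\<^esub> A = adjugate2 A"
  by (rule SL2.inv_equality) (simp_all add: adjugate2_mult det_adjugate2)

lemma Sm_Tm_SL2: "{Sm, Tm} \<subseteq> carrier SL2"
  by (simp add: Sm_def Tm_def det_mat2)

lemma subgroup_H5: "subgroup H5 SL2"
  unfolding H5_def by (rule SL2.generate_is_subgroup[OF Sm_Tm_SL2])

lemma group_H5grp: "group H5grp"
  unfolding H5grp_def by (rule SL2.subgroup_imp_group[OF subgroup_H5])

interpretation H5grp: group H5grp by (rule group_H5grp)

lemma H5grp_simps [simp]:
  "carrier H5grp = H5" "mult H5grp = (\<lambda>A B. A ** B)" "one H5grp = mat 1"
  by (simp_all add: H5grp_def SL2_def)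

lemma det_H5: "A \<in> H5 \<Longrightarrow> det A = 1"
  using subgroup.subset[OF subgroup_H5] by auto

lemma inv_H5grp: "A \<in> H5 \<Longrightarrow> inv\<^bsub>H5grp\<^esub> A = adjugate2 A"
  unfolding H5grp_def using SL2.m_inv_consistent[OF subgroup_H5] inv_SL2 det_H5 by simp

lemma H5_mult: "A \<in> H5 \<Longrightarrow> B \<in> H5 \<Longrightarrow> A ** B \<in> H5"
  using H5grp.m_closed by simp

lemma H5_adjugate2: "A \<in> H5 \<Longrightarrow> adjugate2 A \<in> H5"
  using H5grp.inv_closed inv_H5grp by fastforce

lemma H5_one: "mat 1 \<in> H5"
  using H5grp.one_closed by simp

lemma Sm_H5: "Sm \<in> H5" and Tm_H5: "Tm \<in> H5"
  unfolding H5_def by (rule generate.incl, simp)+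

lemma H5_eq_generate: "H5 = generate H5grp {Sm, Tm}"
proof -
  have "generate (SL2\<lparr>carrier := H5\<rparr>) {Sm, Tm} = generate SL2 {Sm, Tm}"
    by (rule SL2.generate_consistent[OF _ subgroup_H5]) (use Sm_H5 Tm_H5 in blast)
  thus ?thesis unfolding H5grp_def H5_def[symmetric] by simp
qed

definition Zlam_mat :: "real^'n^'m \<Rightarrow> bool" where
  "Zlam_mat A \<longleftrightarrow> (\<forall>i j. A$i$j \<in> Zlam)"

lemma Zlam_sum: "(\<And>k. f k \<in> Zlam) \<Longrightarrow> sum f S \<in> Zlam"
  by (induction S rule: infinite_finite_induct) simp_all

lemma Zlam_mat_mult:
  fixes A :: "real^'n^'m" and B :: "real^'p^'n"
  shows "Zlam_mat A \<Longrightarrow> Zlam_mat B \<Longrightarrow> Zlam_mat (A ** B)"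
  unfolding Zlam_mat_def matrix_matrix_mult_def by (simp add: Zlam_sum)

lemma H5_Zlam_mat: "A \<in> H5 \<Longrightarrow> Zlam_mat A"
  unfolding H5_def
proof (induction A rule: generate.induct)
  case one
  show ?case by (simp add: Zlam_mat_def mat_def)
next
  case (incl A)
  thus ?case by (auto simp: Sm_def Tm_def Zlam_mat_def forall_2)
next
  case (inv A)
  hence "inv\<^bsub>SL2\<^esub> A = adjugate2 A" using Sm_Tm_SL2 inv_SL2 by auto
  with inv show ?case by (auto simp: Sm_def Tm_def Zlam_mat_def forall_2)
next
  case (eng A B)
  thus ?case by (simp add: Zlam_mat_mult)
qed

definition mat_cong :: "real \<Rightarrow> real^'n^'m \<Rightarrow> real^'n^'m \<Rightarrow> bool" where
  "mat_cong t A B \<longleftrightarrow> (\<forall>i j. A$i$j - B$i$j \<in> ideal_gen t)"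

lemma ideal_gen_sum: "(\<And>k. f k \<in> ideal_gen t) \<Longrightarrow> sum f S \<in> ideal_gen t"
  by (induction S rule: infinite_finite_induct) simp_all

lemma ideal_gen_mult_diff:
  assumes "x - x' \<in> ideal_gen t" "y - y' \<in> ideal_gen t" "y \<in> Zlam" "x' \<in> Zlam"
  shows "x * y - x' * y' \<in> ideal_gen t"
proof -
  have "x * y - x' * y' = (x - x') * y + x' * (y - y')" by (simp add: algebra_simps)
  thus ?thesis using assms ideal_gen_mult_right ideal_gen_mult_left ideal_gen_add by metis
qed

lemma mat_cong_refl: "mat_cong t A A"
  by (simp add: mat_cong_def)

lemma mat_cong_mult:
  fixes A A' :: "real^'n^'m" and B B' :: "real^'p^'n"
  assumes "mat_cong t A A'" "mat_cong t B B'" "Zlam_mat B" "Zlam_mat A'"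
  shows "mat_cong t (A ** B) (A' ** B')"
  unfolding mat_cong_def
proof (intro allI)
  fix i j
  have "(A ** B)$i$j - (A' ** B')$i$j = (\<Sum>k\<in>UNIV. A$i$k * B$k$j - A'$i$k * B'$k$j)"
    by (simp add: matrix_matrix_mult_def sum_subtractf)
  also have "\<dots> \<in> ideal_gen t"
    using assms unfolding mat_cong_def Zlam_mat_def by (intro ideal_gen_sum ideal_gen_mult_diff) auto
  finally show "(A ** B)$i$j - (A' ** B')$i$j \<in> ideal_gen t" .
qed

lemma Hcong_eq: "Hcong t = {A \<in> H5. mat_cong t A (mat 1)}"
  by (auto simp: Hcong_def mat_cong_def forall_2 mat_def)

lemma subgroup_Hcong: "subgroup (Hcong t) H5grp"
proof (rule H5grp.subgroupI)
  show "Hcong t \<subseteq> carrier H5grp" "Hcong t \<noteq> {}"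
    using H5_one mat_cong_refl by (auto simp: Hcong_eq)
next
  fix A assume "A \<in> Hcong t"
  hence "A \<in> H5" "mat_cong t A (mat 1)" by (auto simp: Hcong_eq)
  moreover have "mat_cong t (adjugate2 A) (mat 1)"
    using \<open>mat_cong t A (mat 1)\<close>
    by (cases A rule: mat2_cases) (simp add: mat_cong_def forall_2 mat2_one)
  ultimately show "inv\<^bsub>H5grp\<^esub> A \<in> Hcong t" by (simp add: Hcong_eq inv_H5grp H5_adjugate2)
next
  fix A B assume "A \<in> Hcong t" "B \<in> Hcong t"
  hence A: "A \<in> H5" "mat_cong t A (mat 1)" and B: "B \<in> H5" "mat_cong t B (mat 1)"
    by (auto simp: Hcong_eq)
  have "mat_cong t (A ** B) (mat 1 ** mat 1)"
    using A B H5_Zlam_mat H5_one by (intro mat_cong_mult) auto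
  thus "A \<otimes>\<^bsub>H5grp\<^esub> B \<in> Hcong t" using A B by (simp add: Hcong_eq H5_mult)
qed

lemma normal_Hcong: "Hcong t \<lhd> H5grp"
  unfolding H5grp.normal_inv_iff
proof (intro conjI ballI subgroup_Hcong)
  fix X A assume "X \<in> carrier H5grp" "A \<in> Hcong t"
  hence X: "X \<in> H5" "adjugate2 X \<in> H5" and A: "A \<in> H5" "mat_cong t A (mat 1)"
    by (auto simp: Hcong_eq H5_adjugate2)
  have "mat_cong t (X ** A ** adjugate2 X) (X ** mat 1 ** adjugate2 X)"
    using X A H5_Zlam_mat H5_mult H5_one by (intro mat_cong_mult mat_cong_refl) auto
  moreover have "X ** mat 1 ** adjugate2 X = mat 1" using mult_adjugate2 det_H5 X by simp
  ultimately show "X \<otimes>\<^bsub>H5grp\<^esub> A \<otimes>\<^bsub>H5grp\<^esub> inv\<^bsub>H5grp\<^esub> X \<in> Hcong t"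
    using X A by (simp add: Hcong_eq inv_H5grp H5_mult)
qed

lemma Hcong_mult_eq_Int:
  assumes "t \<in> Zlam" "p \<in> Zlam" "x \<in> ideal_gen t" "y \<in> ideal_gen p" "x + y = 1"
  shows "Hcong (t * p) = Hcong t \<inter> Hcong p"
  using ideal_gen_mult_eq_Int[OF assms] by (auto simp: Hcong_def)

definition Tpow :: "int \<Rightarrow> real^2^2" where "Tpow n = mat2 1 (of_int n * lam) 0 1"
definition Lpow :: "int \<Rightarrow> real^2^2" where "Lpow n = mat2 1 0 (of_int n * lam) 1"

lemma Tpow_add: "Tpow (m + n) = Tpow m ** Tpow n"
  and Lpow_add: "Lpow (m + n) = Lpow m ** Lpow n"
  by (simp_all add: Tpow_def Lpow_def mat2_mult algebra_simps)

lemma Tpow_H5: "Tpow n \<in> H5"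
proof (induction n rule: int_induct[where k = 0])
  case base
  show ?case using H5_one by (simp add: Tpow_def mat2_one)
next
  case (step1 n)
  have "Tpow (n + 1) = Tpow n ** Tm" by (simp add: Tpow_add) (simp add: Tpow_def Tm_def)
  thus ?case using step1 Tm_H5 H5_mult by simp
next
  case (step2 n)
  have "Tpow (n - 1) = Tpow n ** adjugate2 Tm"
    by (simp add: Tpow_def Tm_def mat2_mult algebra_simps)
  thus ?case using step2 Tm_H5 H5_mult H5_adjugate2 by simp
qed

lemma Lpow_H5: "Lpow n \<in> H5"
proof -
  have "Lpow n = Sm ** Tpow (- n) ** adjugate2 Sm" by (simp add: Lpow_def Tpow_def Sm_def mat2_mult)
  thus ?thesis using Tpow_H5 Sm_H5 H5_adjugate2 H5_mult by simp
qed

lemma Sm_eq_Lpow_Tpow_word: "Lpow 1 ** Tpow (- 1) ** Lpow 1 ** Tpow (- 1) ** Lpow 1 = Sm"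
proof -
  have "Lpow 1 ** Tpow (- 1) = mat2 1 (- lam) lam (- lam)"
    by (simp add: Lpow_def Tpow_def mat2_mult lam_squared)
  moreover have "mat2 1 (- lam) lam (- lam) ** mat2 1 (- lam) lam (- lam) = mat2 (- lam) 1 (- 1) 0"
    by (simp add: mat2_mult lam_squared)
  moreover have "mat2 (- lam) 1 (- 1) 0 ** Lpow 1 = Sm"
    by (simp add: Lpow_def Sm_def mat2_mult)
  moreover have "Lpow 1 ** Tpow (- 1) ** Lpow 1 ** Tpow (- 1) ** Lpow 1
                 = (Lpow 1 ** Tpow (- 1)) ** (Lpow 1 ** Tpow (- 1)) ** Lpow 1"
    by (simp add: matrix_mul_assoc)
  ultimately show ?thesis by simp
qed

lemma subgroup_containing_Tpow_Lpow_eq_H5: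
  assumes K: "subgroup K H5grp" and "Tpow 1 \<in> K" "Lpow 1 \<in> K"
  shows "K = H5"
proof
  have "Tpow (- 1) = inv\<^bsub>H5grp\<^esub> (Tpow 1)"
    by (simp add: inv_H5grp Tpow_H5) (simp add: Tpow_def)
  hence "Tpow (- 1) \<in> K" using subgroup.m_inv_closed[OF K \<open>Tpow 1 \<in> K\<close>] by simp
  hence "Sm \<in> K"
    using Sm_eq_Lpow_Tpow_word subgroup.m_closed[OF K] \<open>Lpow 1 \<in> K\<close> by (metis H5grp_simps(2))
  moreover have "Tm \<in> K" using \<open>Tpow 1 \<in> K\<close> by (simp add: Tpow_def Tm_def)
  ultimately show "H5 \<subseteq> K"
    unfolding H5_eq_generate by (intro H5grp.generate_subgroup_incl[OF _ K]) auto
  show "K \<subseteq> H5" using subgroup.subset[OF K] by simp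
qed

lemma
  assumes "of_int a \<in> ideal_gen t"
  shows Tpow_Hcong: "Tpow (n * a) \<in> Hcong t" and Lpow_Hcong: "Lpow (n * a) \<in> Hcong t"
proof -
  have "of_int (n * a) * lam \<in> ideal_gen t"
    using ideal_gen_mult_left[OF assms, of "of_int n * lam"] by (simp add: ac_simps)
  thus "Tpow (n * a) \<in> Hcong t" "Lpow (n * a) \<in> Hcong t"
    using Tpow_H5[of "n * a"] Lpow_H5[of "n * a"]
    by (simp_all add: Hcong_def) (simp_all add: Tpow_def Lpow_def)
qed

lemma additive_family_in_set_mult:
  fixes f :: "int \<Rightarrow> 'a"
  assumes "\<And>m n. f (m + n) = f m \<otimes>\<^bsub>G\<^esub> f n" "\<And>n. f (n * a) \<in> A" "\<And>n. f (n * b) \<in> B"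
    and "u * a + v * b = 1"
  shows "f n \<in> A <#>\<^bsub>G\<^esub> B"
proof -
  have "n = n * u * a + n * v * b" using \<open>u * a + v * b = 1\<close> by (metis distrib_left mult.assoc mult_1_right)
  hence "f n = f (n * u * a) \<otimes>\<^bsub>G\<^esub> f (n * v * b)" using assms(1) by metis
  thus ?thesis using assms(2,3) unfolding set_mult_def by blast
qed

lemma H5_eq_Hcong_set_mult:
  assumes "of_int a \<in> ideal_gen t" "of_int b \<in> ideal_gen p" "coprime a b"
  shows "H5 = Hcong t <#>\<^bsub>H5grp\<^esub> Hcong p"
proof -
  obtain u v where uv: "u * a + v * b = 1"
    using bezout_int[of a b] \<open>coprime a b\<close> by (auto simp: coprime_iff_gcd_eq_1)
  have "subgroup (Hcong t <#>\<^bsub>H5grp\<^esub> Hcong p) H5grp"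
    by (rule H5grp.normal_set_mult_subgroup[OF normal_Hcong subgroup_Hcong])
  moreover have "Tpow 1 \<in> Hcong t <#>\<^bsub>H5grp\<^esub> Hcong p"
    using additive_family_in_set_mult[where f = Tpow and G = H5grp and n = 1, OF _ _ _ uv]
      Tpow_add Tpow_Hcong[OF assms(1)] Tpow_Hcong[OF assms(2)] by simp
  moreover have "Lpow 1 \<in> Hcong t <#>\<^bsub>H5grp\<^esub> Hcong p"
    using additive_family_in_set_mult[where f = Lpow and G = H5grp and n = 1, OF _ _ _ uv]
      Lpow_add Lpow_Hcong[OF assms(1)] Lpow_Hcong[OF assms(2)] by simp
  ultimately have "Hcong t <#>\<^bsub>H5grp\<^esub> Hcong p = H5"
    by (rule subgroup_containing_Tpow_Lpow_eq_H5)
  thus ?thesis by (rule sym)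
qed

theorem lemma4p1:
  fixes \<tau> \<pi> :: real
  assumes "\<tau> \<in> Zlam" and "\<pi> \<in> Zlam" and "\<tau> \<noteq> 0" and "\<pi> \<noteq> 0"
    and "coprime (min_pos_int \<tau>) (min_pos_int \<pi>)"
  shows "H5 = Hcong \<tau> <#>\<^bsub>H5grp\<^esub> Hcong \<pi> \<and>
         idx5 (Hcong (\<tau> * \<pi>)) = idx5 (Hcong \<tau>) * idx5 (Hcong \<pi>)"
proof -
  define a b where "a = int (min_pos_int \<tau>)" and "b = int (min_pos_int \<pi>)"
  have a: "of_int a \<in> ideal_gen \<tau>" and b: "of_int b \<in> ideal_gen \<pi>"
    using min_pos_int_in_ideal_gen assms(1-4) unfolding a_def b_def by simp_all
  have "coprime a b" using assms(5) unfolding a_def b_def by simp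
  then obtain u v where uv: "u * a + v * b = 1"
    using bezout_int[of a b] by (auto simp: coprime_iff_gcd_eq_1)
  have prod: "H5 = Hcong \<tau> <#>\<^bsub>H5grp\<^esub> Hcong \<pi>"
    by (rule H5_eq_Hcong_set_mult[OF a b \<open>coprime a b\<close>])
  have "of_int u * of_int a \<in> ideal_gen \<tau>" "of_int v * of_int b \<in> ideal_gen \<pi>"
    by (rule ideal_gen_mult_left[OF a] ideal_gen_mult_left[OF b], simp)+
  moreover have "of_int u * of_int a + of_int v * of_int b = (1::real)"
    using arg_cong[OF uv, of "of_int :: int \<Rightarrow> real"] by simp
  ultimately have Int: "Hcong (\<tau> * \<pi>) = Hcong \<tau> \<inter> Hcong \<pi>"
    by (rule Hcong_mult_eq_Int[OF assms(1,2)])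
  have "idx5 (Hcong (\<tau> * \<pi>)) = idx5 (Hcong \<tau>) * idx5 (Hcong \<pi>)"
    unfolding idx5_def Int
    by (rule H5grp.card_rcosets_Int[OF subgroup_Hcong subgroup_Hcong]) (simp only: H5grp_simps prod)
  with prod show ?thesis by blast
qed

end
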